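(* Let $\pi:(X,T)\to(Y,T)$ be an extension (factor map) of minimal systems and $d\in\mathbb{N}$. (1) If $Y$ is a $d$-step topological characteristic factor of $X$ and $\pi$ is open, then $(\pi^{(d+1)})^{-1}(N_{d+1}(Y))=N_{d+1}(X)$. (2) If $N_{d+1}(X)$ is $\pi^{(d+1)}$-saturated, i.e. $(\pi^{(d+1)})^{-1}(\pi^{(d+1)}(N_{d+1}(X)))=N_{d+1}(X)$, then $Y$ is a $d$-step topological characteristic factor of $X$.
   Context: $\pi^{(m)}=\pi\times\cdots\times\pi$ ($m$ times). $N_m(X)=\overline{\{(T^{p+q}x,\dots,T^{p+mq}x):x\in X,p,q\in\mathbb{Z}\}}$. $Y$ is a $d$-step topological characteristic factor of $X$ (via $\pi$) if there is a dense $G_\delta$ subset $\Omega\subset X$ such that for every $x\in\Omega$ the set $L_x=\overline{\{(T^nx,T^{2n}x,\dots,T^{dn}x):n\in\mathbb{Z}\}}\subset X^d$ satisfies $(\pi^{(d)})^{-1}(\pi^{(d)}(L_x))=L_x$. *)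

theory Defs
  imports "HOL-Analysis.Analysis" "HOL-Library.FuncSet"
begin

definition tds :: "('a::metric_space \<Rightarrow> 'a) \<Rightarrow> bool" where
  "tds T \<longleftrightarrow> compact (UNIV :: 'a set) \<and> bij T \<and> continuous_on UNIV T
     \<and> continuous_on UNIV (inv T)"

definition tpow :: "('a \<Rightarrow> 'a) \<Rightarrow> int \<Rightarrow> 'a \<Rightarrow> 'a" where
  "tpow T n = (if n \<ge> 0 then T ^^ nat n else inv T ^^ nat (- n))"

definition minimal_sys :: "('a::metric_space \<Rightarrow> 'a) \<Rightarrow> bool" where
  "minimal_sys T \<longleftrightarrow> tds T \<and>
     (\<forall>A. closed A \<and> T ` A \<subseteq> A \<longrightarrow> A = {} \<or> A = UNIV)"

definition factor_map :: "('a::metric_space \<Rightarrow> 'a) \<Rightarrow> ('b::metric_space \<Rightarrow> 'b) \<Rightarrow> ('a \<Rightarrow> 'b) \<Rightarrow> bool" where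
  "factor_map T S \<pi> \<longleftrightarrow> tds T \<and> tds S \<and> continuous_on UNIV \<pi> \<and> surj \<pi> \<and> \<pi> \<circ> T = S \<circ> \<pi>"

definition is_open_map :: "('a::topological_space \<Rightarrow> 'b::topological_space) \<Rightarrow> bool" where
  "is_open_map f \<longleftrightarrow> (\<forall>U. open U \<longrightarrow> open (f ` U))"

text \<open>X^m is modelled as the extensional functions on {1..m} (coordinates 1..m), with the
  product topology on functions nat => 'a.\<close>

definition pi_pow :: "('a \<Rightarrow> 'b) \<Rightarrow> nat \<Rightarrow> (nat \<Rightarrow> 'a) \<Rightarrow> (nat \<Rightarrow> 'b)" where
  "pi_pow \<pi> m f = restrict (\<lambda>i. \<pi> (f i)) {1..m}"

definition pi_pow_preimage :: "('a \<Rightarrow> 'b) \<Rightarrow> nat \<Rightarrow> (nat \<Rightarrow> 'b) set \<Rightarrow> (nat \<Rightarrow> 'a) set" where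
  "pi_pow_preimage \<pi> m S = {f \<in> extensional {1..m}. pi_pow \<pi> m f \<in> S}"

definition Nset :: "('a::topological_space \<Rightarrow> 'a) \<Rightarrow> nat \<Rightarrow> (nat \<Rightarrow> 'a) set" where
  "Nset T m = closure {restrict (\<lambda>i. tpow T (p + int i * q) x) {1..m} | x p q. True}"

definition Lset :: "('a::topological_space \<Rightarrow> 'a) \<Rightarrow> nat \<Rightarrow> 'a \<Rightarrow> (nat \<Rightarrow> 'a) set" where
  "Lset T d x = closure {restrict (\<lambda>i. tpow T (int i * n) x) {1..d} | n. True}"

definition char_factor :: "('a::metric_space \<Rightarrow> 'a) \<Rightarrow> ('a \<Rightarrow> 'b) \<Rightarrow> nat \<Rightarrow> bool" where
  "char_factor T \<pi> d \<longleftrightarrow> (\<exists>\<Omega>. gdelta_in euclidean \<Omega> \<and> closure \<Omega> = UNIV \<and>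
     (\<forall>x\<in>\<Omega>. pi_pow_preimage \<pi> d (pi_pow \<pi> d ` Lset T d x) = Lset T d x))"

end

(*
  Both parts rest on the inclusion of {x} x L_x in N_(d+1)(X): the tuple
  (x, T^n x, ..., T^(dn) x) is the progression (T^(p+iq) x) with p = -n, q = n.

  (1) Let Omega be the dense set of points x for which L_x is saturated, let pi f lie in
  N_(d+1)(Y) and let U_i be neighbourhoods of the f_i. As pi is open, some progression
  (S^(p+iq) y) has S^(p+iq) y in pi(U_i); by density of Omega its start can be moved to pi x
  with x in Omega and in U_1, so that pi(T^(jq) x) lies in pi(U_(j+1)). Saturation of L_x
  replaces the T^(jq) x by points z_j of U_(j+1) with z in L_x, and (x, z) is then a point
  of N_(d+1)(X) in U_1 x ... x U_(d+1).

  (2) For open V_1, ..., V_d the points whose diagonal orbit (T^n x, ..., T^(dn) x) visits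
  V_1 x ... x V_d form an open set. A point x lying, for every tuple of basic open sets,
  either in this set or outside its closure satisfies L_x = {w. (x, w) in N_(d+1)(X)}, and
  by Baire such points form a dense G_delta set. Saturation of N_(d+1)(X) passes to these
  fibres.
*)

theory Submission
  imports Defs
begin

section \<open>Closures of sets of finite tuples\<close>

lemma closed_extensional: "closed (extensional I :: ('i \<Rightarrow> 'a::t1_space) set)"
proof -
  have "extensional I = (\<Inter>i\<in>-I. (\<lambda>h :: 'i \<Rightarrow> 'a. h i) -` {undefined})"
    by (auto simp: extensional_def)
  also have "closed \<dots>"
    by (intro closed_INT ballI closed_vimage closed_singleton continuous_on_product_coordinates)
  finally show ?thesis .
qed

lemma open_Pi_finite:
  assumes "finite I" "\<And>i. i \<in> I \<Longrightarrow> open (U i)"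
  shows "open (Pi I U :: ('i \<Rightarrow> 'a::topological_space) set)"
proof -
  have "Pi I U = (\<Inter>i\<in>I. (\<lambda>f :: 'i \<Rightarrow> 'a. f i) -` U i)"
    by auto
  also have "open \<dots>"
    using assms by (intro open_INT ballI open_vimage continuous_on_product_coordinates)
  finally show ?thesis .
qed

lemma mem_closure_extensional_iff:
  fixes A :: "('i \<Rightarrow> 'a::t1_space) set"
  assumes "A \<subseteq> extensional I" "finite I"
  shows "f \<in> closure A \<longleftrightarrow> f \<in> extensional I \<and>
    (\<forall>U. (\<forall>i\<in>I. open (U i) \<and> f i \<in> U i) \<longrightarrow> (\<exists>g\<in>A. \<forall>i\<in>I. g i \<in> U i))"
proof safe
  assume "f \<in> closure A"
  then show "f \<in> extensional I"
    using closure_minimal[OF assms(1) closed_extensional] by blast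
  fix U assume "\<forall>i\<in>I. open (U i) \<and> f i \<in> U i"
  then have "open (Pi I U)" "f \<in> Pi I U"
    using open_Pi_finite[OF assms(2)] by auto
  with \<open>f \<in> closure A\<close> obtain g where "g \<in> A" "g \<in> Pi I U"
    by (meson closure_iff_nhds_not_empty disjoint_iff order_refl)
  then show "\<exists>g\<in>A. \<forall>i\<in>I. g i \<in> U i"
    by auto
next
  assume f: "f \<in> extensional I"
    and approx: "\<forall>U. (\<forall>i\<in>I. open (U i) \<and> f i \<in> U i) \<longrightarrow> (\<exists>g\<in>A. \<forall>i\<in>I. g i \<in> U i)"
  show "f \<in> closure A"
    unfolding closure_iff_nhds_not_empty
  proof (intro allI impI)
    fix W V assume "W \<subseteq> V" "open W" "f \<in> W"
    then have "openin (product_topology (\<lambda>_. euclidean) UNIV) W"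
      by (simp add: open_fun_def)
    from product_topology_open_contains_basis[OF this \<open>f \<in> W\<close>] obtain X where
      X: "f \<in> (\<Pi>\<^sub>E i\<in>UNIV. X i)" "\<And>i. open (X i)" "(\<Pi>\<^sub>E i\<in>UNIV. X i) \<subseteq> W"
      by auto
    then obtain g where "g \<in> A" "\<forall>i\<in>I. g i \<in> X i"
      using approx by blast
    moreover have "g i = f i" if "i \<notin> I" for i
      using that f \<open>g \<in> A\<close> assms(1) by (auto simp: extensional_def)
    ultimately have "g \<in> (\<Pi>\<^sub>E i\<in>UNIV. X i)"
      using X(1) by (auto simp: PiE_iff)
    with \<open>g \<in> A\<close> X(3) \<open>W \<subseteq> V\<close> show "A \<inter> V \<noteq> {}"
      by blast
  qed
qed

lemma mem_Nset_iff:
  fixes T :: "'a::t1_space \<Rightarrow> 'a"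
  shows "f \<in> Nset T m \<longleftrightarrow> f \<in> extensional {1..m} \<and>
    (\<forall>U. (\<forall>i\<in>{1..m}. open (U i) \<and> f i \<in> U i) \<longrightarrow>
      (\<exists>x p q. \<forall>i\<in>{1..m}. tpow T (p + int i * q) x \<in> U i))"
proof -
  let ?G = "{restrict (\<lambda>i. tpow T (p + int i * q) x) {1..m} | x p q. True}"
  have "?G \<subseteq> extensional {1..m}"
    by auto
  moreover have "(\<exists>g\<in>?G. \<forall>i\<in>{1..m}. g i \<in> U i) \<longleftrightarrow>
      (\<exists>x p q. \<forall>i\<in>{1..m}. tpow T (p + int i * q) x \<in> U i)" for U
    by fastforce
  ultimately show ?thesis
    unfolding Nset_def by (simp add: mem_closure_extensional_iff)
qed

lemma mem_Lset_iff:
  fixes T :: "'a::t1_space \<Rightarrow> 'a"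
  shows "w \<in> Lset T d x \<longleftrightarrow> w \<in> extensional {1..d} \<and>
    (\<forall>U. (\<forall>j\<in>{1..d}. open (U j) \<and> w j \<in> U j) \<longrightarrow>
      (\<exists>n. \<forall>j\<in>{1..d}. tpow T (int j * n) x \<in> U j))"
proof -
  let ?G = "{restrict (\<lambda>j. tpow T (int j * n) x) {1..d} | n. True}"
  have "?G \<subseteq> extensional {1..d}"
    by auto
  moreover have "(\<exists>g\<in>?G. \<forall>j\<in>{1..d}. g j \<in> U j) \<longleftrightarrow>
      (\<exists>n. \<forall>j\<in>{1..d}. tpow T (int j * n) x \<in> U j)" for U
    by fastforce
  ultimately show ?thesis
    unfolding Lset_def by (simp add: mem_closure_extensional_iff)
qed

section \<open>Integer iterates\<close>

lemma tpow_0 [simp]: "tpow T 0 x = x"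
  by (simp add: tpow_def)

lemma tpow_plus_1:
  assumes "bij T"
  shows "tpow T (n + 1) x = T (tpow T n x)"
proof (cases "n \<ge> 0")
  case True
  then have "nat (n + 1) = Suc (nat n)"
    by auto
  with True show ?thesis
    by (simp add: tpow_def)
next
  case False
  then have "nat (- n) = Suc (nat (- (n + 1)))"
    by auto
  with False have "tpow T n x = inv T (tpow T (n + 1) x)"
    by (cases "n + 1 = 0") (auto simp: tpow_def)
  with assms show ?thesis
    by (simp add: bij_is_surj surj_f_inv_f)
qed

lemma tpow_minus_1:
  assumes "bij T"
  shows "tpow T (n - 1) x = inv T (tpow T n x)"
  using tpow_plus_1[OF assms, of "n - 1" x] assms by (simp add: bij_is_inj inv_f_f)

lemma tpow_add:
  assumes "bij T"
  shows "tpow T a (tpow T b x) = tpow T (a + b) x"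
proof (induction a rule: int_induct[where k = 0])
  case (step1 i)
  then show ?case
    using tpow_plus_1[OF assms, of i] tpow_plus_1[OF assms, of "i + b"] by (simp add: algebra_simps)
next
  case (step2 i)
  then show ?case
    using tpow_minus_1[OF assms, of i] tpow_minus_1[OF assms, of "i + b"] by (simp add: algebra_simps)
qed simp

lemma tpow_shift_progression:
  assumes "bij T"
  shows "tpow T (int j * q) (tpow T (p + q) y) = tpow T (p + int (j+1) * q) y"
  unfolding tpow_add[OF assms] by (simp add: algebra_simps)

lemma tpow_semiconj:
  assumes "bij T" "bij S" and semiconj: "\<pi> \<circ> T = S \<circ> \<pi>"
  shows "\<pi> (tpow T n x) = tpow S n (\<pi> x)"
proof -
  have T: "\<pi> (T y) = S (\<pi> y)" for y
    using semiconj by (metis comp_apply)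
  have inv_T: "\<pi> (inv T y) = inv S (\<pi> y)" for y
  proof -
    have "\<pi> y = S (\<pi> (inv T y))"
      using T[of "inv T y"] assms(1) by (simp add: bij_is_surj surj_f_inv_f)
    with assms(2) show ?thesis
      by (simp add: bij_is_inj inv_f_f)
  qed
  show ?thesis
  proof (induction n rule: int_induct[where k = 0])
    case (step1 i)
    have "\<pi> (tpow T (i + 1) x) = \<pi> (T (tpow T i x))"
      by (simp only: tpow_plus_1[OF assms(1)])
    also have "\<dots> = S (tpow S i (\<pi> x))"
      by (simp only: T step1.IH)
    also have "\<dots> = tpow S (i + 1) (\<pi> x)"
      by (simp only: tpow_plus_1[OF assms(2)])
    finally show ?case .
  next
    case (step2 i)
    have "\<pi> (tpow T (i - 1) x) = \<pi> (inv T (tpow T i x))"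
      by (simp only: tpow_minus_1[OF assms(1)])
    also have "\<dots> = inv S (tpow S i (\<pi> x))"
      by (simp only: inv_T step2.IH)
    also have "\<dots> = tpow S (i - 1) (\<pi> x)"
      by (simp only: tpow_minus_1[OF assms(2)])
    finally show ?case .
  qed simp
qed

lemma continuous_on_funpow:
  fixes f :: "'a::topological_space \<Rightarrow> 'a"
  assumes "continuous_on UNIV f"
  shows "continuous_on UNIV (f ^^ n)"
proof (induction n)
  case (Suc n)
  with assms show ?case
    by (simp add: continuous_on_compose2[of UNIV f UNIV "f ^^ n"])
qed (simp add: continuous_on_id')

lemma continuous_on_tpow:
  "continuous_on UNIV T \<Longrightarrow> continuous_on UNIV (inv T) \<Longrightarrow> continuous_on UNIV (tpow T n)"
  unfolding tpow_def by (simp add: continuous_on_funpow)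

section \<open>Progressions and diagonal orbits\<close>

definition prepend :: "nat \<Rightarrow> 'a \<Rightarrow> (nat \<Rightarrow> 'a) \<Rightarrow> nat \<Rightarrow> 'a" where
  "prepend d x w = restrict (\<lambda>i. if i = 1 then x else w (i - 1)) {1..d+1}"

lemma prepend_extensional [simp]: "prepend d x w \<in> extensional {1..d+1}"
  by (simp add: prepend_def)

lemma ball_prepend_iff:
  "(\<forall>i\<in>{1..d+1}. P i (prepend d x w i)) \<longleftrightarrow> P 1 x \<and> (\<forall>j\<in>{1..d}. P (j+1) (w j))"
proof
  assume all: "\<forall>i\<in>{1..d+1}. P i (prepend d x w i)"
  then have "P 1 (prepend d x w 1)" and "\<forall>j\<in>{1..d}. P (j+1) (prepend d x w (j+1))"
    by auto
  then show "P 1 x \<and> (\<forall>j\<in>{1..d}. P (j+1) (w j))"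
    by (simp add: prepend_def)
next
  assume R: "P 1 x \<and> (\<forall>j\<in>{1..d}. P (j+1) (w j))"
  show "\<forall>i\<in>{1..d+1}. P i (prepend d x w i)"
  proof
    fix i assume i: "i \<in> {1..d+1}"
    show "P i (prepend d x w i)"
    proof (cases "i = 1")
      case False
      with i have "i - 1 \<in> {1..d}" "i - 1 + 1 = i" "prepend d x w i = w (i - 1)"
        by (auto simp: prepend_def)
      with R show ?thesis
        by metis
    qed (use R in \<open>simp add: prepend_def\<close>)
  qed
qed

lemma continuous_on_prepend:
  "continuous_on UNIV (prepend d x :: (nat \<Rightarrow> 'a::topological_space) \<Rightarrow> _)"
proof (rule continuous_on_coordinatewise_then_product)
  show "continuous_on UNIV (\<lambda>w. prepend d x w i)" for i
    by (cases "1 \<le> i"; cases "i \<le> d + 1"; cases "i = 1") (simp_all add: prepend_def)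
qed

lemma pi_pow_prepend:
  "pi_pow \<pi> (d+1) (prepend d x w) = prepend d (\<pi> x) (pi_pow \<pi> d w)"
  by (auto simp: pi_pow_def prepend_def fun_eq_iff)

lemma prepend_Lset_subset_Nset:
  fixes T :: "'a::topological_space \<Rightarrow> 'a"
  shows "prepend d x ` Lset T d x \<subseteq> Nset T (d+1)"
proof -
  have "prepend d x (restrict (\<lambda>j. tpow T (int j * n) x) {1..d}) =
      restrict (\<lambda>i. tpow T (- n + int i * n) x) {1..d+1}" for n
    by (auto simp: prepend_def fun_eq_iff of_nat_diff algebra_simps)
  then have "prepend d x ` {restrict (\<lambda>j. tpow T (int j * n) x) {1..d} | n. True} \<subseteq> Nset T (d+1)"
    unfolding Nset_def by (blast intro: closure_subset[THEN subsetD])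
  then show ?thesis
    unfolding Lset_def Nset_def
    by (rule image_closure_subset[OF continuous_on_subset[OF continuous_on_prepend subset_UNIV]
          closed_closure])
qed

lemma continuous_on_pi_pow:
  fixes \<pi> :: "'a::topological_space \<Rightarrow> 'b::topological_space"
  assumes "continuous_on UNIV \<pi>"
  shows "continuous_on UNIV (pi_pow \<pi> m)"
proof (rule continuous_on_coordinatewise_then_product)
  show "continuous_on UNIV (\<lambda>f. pi_pow \<pi> m f i)" for i
    using continuous_on_compose2[OF assms continuous_on_product_coordinates, of i]
    by (cases "1 \<le> i"; cases "i \<le> m") (simp_all add: pi_pow_def)
qed

lemma pi_pow_Nset_subset:
  fixes T :: "'a::topological_space \<Rightarrow> 'a" and S :: "'b::topological_space \<Rightarrow> 'b"
  assumes "bij T" "bij S" "\<pi> \<circ> T = S \<circ> \<pi>" and "continuous_on UNIV \<pi>"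
  shows "pi_pow \<pi> m ` Nset T m \<subseteq> Nset S m"
proof -
  have "pi_pow \<pi> m (restrict (\<lambda>i. tpow T (p + int i * q) x) {1..m}) =
      restrict (\<lambda>i. tpow S (p + int i * q) (\<pi> x)) {1..m}" for x p q
    by (auto simp: pi_pow_def fun_eq_iff tpow_semiconj[OF assms(1-3)])
  then have "pi_pow \<pi> m ` {restrict (\<lambda>i. tpow T (p + int i * q) x) {1..m} | x p q. True}
      \<subseteq> Nset S m"
    unfolding Nset_def by (blast intro: closure_subset[THEN subsetD])
  then show ?thesis
    unfolding Nset_def
    by (rule image_closure_subset[OF continuous_on_subset[OF continuous_on_pi_pow[OF assms(4)]
          subset_UNIV] closed_closure])
qed

lemma Nset_subset_pi_pow_preimage:
  fixes T :: "'a::t1_space \<Rightarrow> 'a" and S :: "'b::topological_space \<Rightarrow> 'b"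
  assumes "bij T" "bij S" "\<pi> \<circ> T = S \<circ> \<pi>" and "continuous_on UNIV \<pi>"
  shows "Nset T m \<subseteq> pi_pow_preimage \<pi> m (Nset S m)"
  using pi_pow_Nset_subset[OF assms] by (auto simp: pi_pow_preimage_def mem_Nset_iff)

section \<open>Lifting through an open factor map\<close>

lemma open_map_Nset_dense_witness:
  fixes S :: "'b::t1_space \<Rightarrow> 'b" and \<pi> :: "'a::topological_space \<Rightarrow> 'b"
  assumes "bij S" "continuous_on UNIV S" "continuous_on UNIV (inv S)"
    and "continuous_on UNIV \<pi>" "is_open_map \<pi>" and dense: "closure \<Omega> = UNIV"
    and f: "pi_pow \<pi> (d+1) f \<in> Nset S (d+1)" and U: "\<forall>i\<in>{1..d+1}. open (U i) \<and> f i \<in> U i"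
  obtains x q where "x \<in> \<Omega>" "x \<in> U 1"
    "\<And>j. j \<in> {1..d} \<Longrightarrow> tpow S (int j * q) (\<pi> x) \<in> \<pi> ` U (j+1)"
proof -
  have "\<forall>i\<in>{1..d+1}. open (\<pi> ` U i) \<and> pi_pow \<pi> (d+1) f i \<in> \<pi> ` U i"
    using U \<open>is_open_map \<pi>\<close> by (auto simp: is_open_map_def pi_pow_def)
  then obtain y p q where y: "\<And>i. i \<in> {1..d+1} \<Longrightarrow> tpow S (p + int i * q) y \<in> \<pi> ` U i"
    using f unfolding mem_Nset_iff by meson
  define W where "W = U 1 \<inter> \<pi> -` (\<Inter>j\<in>{1..d}. tpow S (int j * q) -` \<pi> ` U (j+1))"
  have "open W"
    using U assms(2-5) unfolding W_def is_open_map_def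
    by (intro open_Int open_vimage open_INT ballI continuous_on_tpow) auto
  have "W \<noteq> {}"
  proof -
    define y1 where "y1 = tpow S (p + q) y"
    have "tpow S (int j * q) y1 \<in> \<pi> ` U (j+1)" if "j \<in> {1..d}" for j
      using y[of "j+1"] that tpow_shift_progression[OF \<open>bij S\<close>] by (simp add: y1_def)
    then have "y1 \<in> (\<Inter>j\<in>{1..d}. tpow S (int j * q) -` \<pi> ` U (j+1))"
      by blast
    moreover obtain x1 where "x1 \<in> U 1" "\<pi> x1 = y1"
      using y[of 1] unfolding y1_def by auto
    ultimately show ?thesis
      unfolding W_def by blast
  qed
  with \<open>open W\<close> dense have "W \<inter> \<Omega> \<noteq> {}"
    using open_Int_closure_eq_empty[of W \<Omega>] by simp
  then obtain x where "x \<in> \<Omega>" "x \<in> U 1" "\<pi> x \<in> (\<Inter>j\<in>{1..d}. tpow S (int j * q) -` \<pi> ` U (j+1))"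
    unfolding W_def by blast
  then show ?thesis
    using that[of x q] by blast
qed

lemma restrict_mem_Lset_if_saturated:
  assumes "pi_pow_preimage \<pi> d (pi_pow \<pi> d ` Lset T d x) = Lset T d x"
    and "\<And>j. j \<in> {1..d} \<Longrightarrow> \<pi> (z j) = \<pi> (tpow T (int j * q) x)"
  shows "restrict z {1..d} \<in> Lset T d x"
proof -
  define l where "l = restrict (\<lambda>j. tpow T (int j * q) x) {1..d}"
  have "l \<in> Lset T d x"
    unfolding Lset_def l_def by (blast intro: closure_subset[THEN subsetD])
  moreover have "pi_pow \<pi> d (restrict z {1..d}) = pi_pow \<pi> d l"
    using assms(2) by (auto simp: pi_pow_def l_def)
  ultimately show ?thesis
    using assms(1) by (auto simp: pi_pow_preimage_def)
qed

lemma pi_pow_preimage_Nset_subset: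
  fixes T :: "'a::t1_space \<Rightarrow> 'a" and S :: "'b::t1_space \<Rightarrow> 'b"
  assumes "bij T" "bij S" "continuous_on UNIV S" "continuous_on UNIV (inv S)"
    and semiconj: "\<pi> \<circ> T = S \<circ> \<pi>" and "continuous_on UNIV \<pi>" "is_open_map \<pi>"
    and "closure \<Omega> = UNIV"
    and sat: "\<And>x. x \<in> \<Omega> \<Longrightarrow> pi_pow_preimage \<pi> d (pi_pow \<pi> d ` Lset T d x) = Lset T d x"
  shows "pi_pow_preimage \<pi> (d+1) (Nset S (d+1)) \<subseteq> Nset T (d+1)"
proof
  fix f assume "f \<in> pi_pow_preimage \<pi> (d+1) (Nset S (d+1))"
  then have f_ext: "f \<in> extensional {1..d+1}" and f: "pi_pow \<pi> (d+1) f \<in> Nset S (d+1)"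
    by (auto simp: pi_pow_preimage_def)
  show "f \<in> Nset T (d+1)"
    unfolding mem_Nset_iff[of f]
  proof (intro conjI allI impI f_ext)
    fix U assume U: "\<forall>i\<in>{1..d+1}. open (U i) \<and> f i \<in> U i"
    obtain x q where x: "x \<in> \<Omega>" "x \<in> U 1"
      and q: "\<And>j. j \<in> {1..d} \<Longrightarrow> tpow S (int j * q) (\<pi> x) \<in> \<pi> ` U (j+1)"
      using open_map_Nset_dense_witness[OF assms(2-4,6-8) f U] by blast
    have "\<exists>z. z \<in> U (j+1) \<and> \<pi> z = \<pi> (tpow T (int j * q) x)" if "j \<in> {1..d}" for j
      using q[OF that] by (auto simp: tpow_semiconj[OF assms(1,2) semiconj] image_iff)
    then obtain z where z: "\<And>j. j \<in> {1..d} \<Longrightarrow> z j \<in> U (j+1) \<and> \<pi> (z j) = \<pi> (tpow T (int j * q) x)"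
      by metis
    define w where "w = restrict z {1..d}"
    have "w \<in> Lset T d x"
      unfolding w_def
      by (rule restrict_mem_Lset_if_saturated[OF sat[OF \<open>x \<in> \<Omega>\<close>]]) (use z in blast)
    then have "prepend d x w \<in> Nset T (d+1)"
      using prepend_Lset_subset_Nset by blast
    moreover have "\<forall>i\<in>{1..d+1}. open (U i) \<and> prepend d x w i \<in> U i"
      unfolding ball_prepend_iff[where P = "\<lambda>i v. open (U i) \<and> v \<in> U i"]
      using U x z by (simp add: w_def)
    ultimately show "\<exists>x p q. \<forall>i\<in>{1..d+1}. tpow T (p + int i * q) x \<in> U i"
      unfolding mem_Nset_iff by blast
  qed
qed

lemma pi_pow_preimage_Nset_eq_if_char_factor:
  fixes T :: "'a::metric_space \<Rightarrow> 'a" and S :: "'b::t1_space \<Rightarrow> 'b"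
  assumes "bij T" "bij S" "continuous_on UNIV S" "continuous_on UNIV (inv S)"
    and "\<pi> \<circ> T = S \<circ> \<pi>" "continuous_on UNIV \<pi>" "is_open_map \<pi>" and "char_factor T \<pi> d"
  shows "pi_pow_preimage \<pi> (d+1) (Nset S (d+1)) = Nset T (d+1)"
proof (rule equalityI)
  obtain \<Omega> where "closure \<Omega> = UNIV"
    and "\<And>x. x \<in> \<Omega> \<Longrightarrow> pi_pow_preimage \<pi> d (pi_pow \<pi> d ` Lset T d x) = Lset T d x"
    using \<open>char_factor T \<pi> d\<close> unfolding char_factor_def by blast
  then show "pi_pow_preimage \<pi> (d+1) (Nset S (d+1)) \<subseteq> Nset T (d+1)"
    by (rule pi_pow_preimage_Nset_subset[OF assms(1-7)])
  show "Nset T (d+1) \<subseteq> pi_pow_preimage \<pi> (d+1) (Nset S (d+1))"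
    by (rule Nset_subset_pi_pow_preimage[OF assms(1,2,5,6)])
qed

section \<open>Generic points\<close>

lemma compact_UNIV_imp_second_countable:
  assumes "compact (UNIV :: 'a::metric_space set)"
  shows "second_countable (euclidean :: 'a topology)"
proof -
  have "\<exists>K. finite K \<and> (UNIV :: 'a set) \<subseteq> (\<Union>c\<in>K. ball c (1 / Suc k))" for k
    using assms unfolding compact_eq_totally_bounded by simp
  then obtain K where K: "\<And>k. finite (K k)" "\<And>k. (UNIV :: 'a set) \<subseteq> (\<Union>c\<in>K k. ball c (1 / Suc k))"
    by metis
  define \<B> where "\<B> = (\<Union>k. (\<lambda>c. ball c (1 / Suc k)) ` K k)"
  have countable: "countable \<B>"
    unfolding \<B>_def by (intro countable_UN countableI_type countable_finite finite_imageI K(1))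
  have open_basis: "open B" if "B \<in> \<B>" for B
    using that by (auto simp: \<B>_def)
  have basis: "\<exists>B\<in>\<B>. x \<in> B \<and> B \<subseteq> U" if "open U" "x \<in> U" for U x
  proof -
    obtain e where "e > 0" "ball x e \<subseteq> U"
      using \<open>open U\<close> \<open>x \<in> U\<close> open_contains_ball by blast
    have small_ball: "ball c r \<subseteq> ball x e" if "x \<in> ball c r" "r < e / 2" for c r
    proof
      fix z assume "z \<in> ball c r"
      with that have "dist x c < r" "dist c z < r"
        by (auto simp: dist_commute)
      then have "dist x z < e"
        using dist_triangle[of x z c] \<open>r < e / 2\<close> by linarith
      then show "z \<in> ball x e"
        by simp
    qed
    obtain k where k: "1 / Suc k < e / 2"
      using reals_Archimedean[of "e / 2"] \<open>e > 0\<close> by (auto simp: inverse_eq_divide)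
    obtain c where c: "c \<in> K k" "x \<in> ball c (1 / Suc k)"
      using K(2)[of k] by blast
    have "ball c (1 / Suc k) \<in> \<B>"
      unfolding \<B>_def using c(1) by blast
    with c(2) small_ball[OF c(2) k] \<open>ball x e \<subseteq> U\<close> show ?thesis
      by blast
  qed
  show ?thesis
    unfolding second_countable_def using countable open_basis basis by auto
qed

lemma Baire_compact_UNIV:
  fixes \<G> :: "'a::metric_space set set"
  assumes "compact (UNIV :: 'a set)" "countable \<G>"
    and "\<And>G. G \<in> \<G> \<Longrightarrow> open G \<and> closure G = UNIV"
  shows "closure (\<Inter>\<G>) = UNIV"
proof -
  have "euclidean closure_of \<Inter>\<G> = topspace (euclidean :: 'a topology)"
  proof (rule Baire_category)
    have "compact_space (euclidean :: 'a topology)"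
      using assms(1) by (simp add: compact_space_def compactin_euclidean_iff)
    then show "completely_metrizable_space (euclidean :: 'a topology) \<or>
        locally_compact_space (euclidean :: 'a topology) \<and> regular_space (euclidean :: 'a topology)"
      by (simp add: compact_imp_locally_compact_space regular_space_euclidean)
  qed (use assms(2,3) in \<open>auto simp: euclidean_closure_of\<close>)
  then show ?thesis
    by (simp add: euclidean_closure_of)
qed

lemma closure_Un_Compl_closure: "closure (A \<union> - closure A) = UNIV"
  using closure_subset[of "- closure A"] by (auto simp: closure_Un)

definition diag_visit_set :: "('a \<Rightarrow> 'a) \<Rightarrow> nat \<Rightarrow> (nat \<Rightarrow> 'a set) \<Rightarrow> 'a set" where
  "diag_visit_set T d V = {x. \<exists>n. \<forall>j\<in>{1..d}. tpow T (int j * n) x \<in> V j}"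

lemma open_diag_visit_set:
  assumes "continuous_on UNIV T" "continuous_on UNIV (inv T)" "\<And>j. j \<in> {1..d} \<Longrightarrow> open (V j)"
  shows "open (diag_visit_set T d V)"
proof -
  have "diag_visit_set T d V = (\<Union>n. \<Inter>j\<in>{1..d}. tpow T (int j * n) -` V j)"
    unfolding diag_visit_set_def by blast
  also have "open \<dots>"
    using assms by (intro open_UN open_INT ballI open_vimage continuous_on_tpow) auto
  finally show ?thesis .
qed

lemma prepend_Nset_imp_closure_diag_visit_set:
  fixes T :: "'a::t1_space \<Rightarrow> 'a"
  assumes "bij T" "prepend d x w \<in> Nset T (d+1)"
    and V: "\<And>j. j \<in> {1..d} \<Longrightarrow> open (V j) \<and> w j \<in> V j"
  shows "x \<in> closure (diag_visit_set T d V)"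
  unfolding closure_iff_nhds_not_empty
proof (intro allI impI)
  fix A W assume "W \<subseteq> A" "open W" "x \<in> W"
  define U where "U i = (if i = 1 then W else V (i - 1))" for i
  have "\<forall>i\<in>{1..d+1}. open (U i) \<and> prepend d x w i \<in> U i"
    unfolding ball_prepend_iff[where P = "\<lambda>i v. open (U i) \<and> v \<in> U i"]
    using V \<open>open W\<close> \<open>x \<in> W\<close> by (simp add: U_def)
  then obtain y p q where y: "\<And>i. i \<in> {1..d+1} \<Longrightarrow> tpow T (p + int i * q) y \<in> U i"
    using assms(2) unfolding mem_Nset_iff by meson
  define y1 where "y1 = tpow T (p + q) y"
  have "y1 \<in> W"
    using y[of 1] by (simp add: U_def y1_def)
  moreover have "tpow T (int j * q) y1 \<in> V j" if "j \<in> {1..d}" for j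
    using y[of "j+1"] that tpow_shift_progression[OF \<open>bij T\<close>] by (simp add: U_def y1_def)
  ultimately show "diag_visit_set T d V \<inter> A \<noteq> {}"
    using \<open>W \<subseteq> A\<close> unfolding diag_visit_set_def by blast
qed

lemma gdelta_in_Inter_open:
  assumes "countable \<G>" "\<And>G. G \<in> \<G> \<Longrightarrow> open G"
  shows "gdelta_in euclidean (\<Inter>\<G>)"
proof (cases "\<G> = {}")
  case False
  with assms show ?thesis
    by (intro gdelta_in_Inter open_imp_gdelta_in) auto
qed (metis Inter_empty gdelta_in_topspace topspace_euclidean)

lemma mem_Lset_if_diag_visits_decided:
  fixes T :: "'a::t1_space \<Rightarrow> 'a"
  assumes "bij T" and open_basis: "\<And>B. B \<in> \<B> \<Longrightarrow> open B"
    and basis: "\<And>U y. open U \<Longrightarrow> y \<in> U \<Longrightarrow> \<exists>B\<in>\<B>. y \<in> B \<and> B \<subseteq> U"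
    and decided: "\<And>V. V \<in> (\<Pi>\<^sub>E j\<in>{1..d}. \<B>) \<Longrightarrow>
      x \<in> diag_visit_set T d V \<union> - closure (diag_visit_set T d V)"
    and "w \<in> extensional {1..d}" "prepend d x w \<in> Nset T (d+1)"
  shows "w \<in> Lset T d x"
  unfolding mem_Lset_iff
proof (intro conjI allI impI \<open>w \<in> extensional {1..d}\<close>)
  fix U assume U: "\<forall>j\<in>{1..d}. open (U j) \<and> w j \<in> U j"
  have "\<forall>j\<in>{1..d}. \<exists>B. B \<in> \<B> \<and> w j \<in> B \<and> B \<subseteq> U j"
  proof
    fix j assume "j \<in> {1..d}"
    with U have "\<exists>B\<in>\<B>. w j \<in> B \<and> B \<subseteq> U j"
      by (intro basis) auto
    then show "\<exists>B. B \<in> \<B> \<and> w j \<in> B \<and> B \<subseteq> U j"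
      by blast
  qed
  then obtain V where V: "\<forall>j\<in>{1..d}. V j \<in> \<B> \<and> w j \<in> V j \<and> V j \<subseteq> U j"
    by (auto dest: bchoice)
  define V' where "V' = restrict V {1..d}"
  have "x \<in> diag_visit_set T d V' \<union> - closure (diag_visit_set T d V')"
    using V by (intro decided) (simp add: V'_def)
  moreover have "x \<in> closure (diag_visit_set T d V')"
    using V open_basis
    by (intro prepend_Nset_imp_closure_diag_visit_set[OF assms(1) \<open>prepend d x w \<in> Nset T (d+1)\<close>])
      (auto simp: V'_def)
  ultimately obtain n where "\<forall>j\<in>{1..d}. tpow T (int j * n) x \<in> V j"
    by (auto simp: diag_visit_set_def V'_def)
  with V show "\<exists>n. \<forall>j\<in>{1..d}. tpow T (int j * n) x \<in> U j"
    by blast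
qed

lemma dense_gdelta_prepend_Nset_imp_Lset:
  fixes T :: "'a::metric_space \<Rightarrow> 'a"
  assumes "bij T" "continuous_on UNIV T" "continuous_on UNIV (inv T)" "compact (UNIV :: 'a set)"
  obtains \<Omega> where "gdelta_in euclidean \<Omega>" "closure \<Omega> = UNIV"
    "\<And>x w. x \<in> \<Omega> \<Longrightarrow> w \<in> extensional {1..d} \<Longrightarrow> prepend d x w \<in> Nset T (d+1) \<Longrightarrow>
      w \<in> Lset T d x"
proof -
  obtain \<B> :: "'a set set" where "countable \<B>" and open_basis: "\<And>B. B \<in> \<B> \<Longrightarrow> open B"
    and basis: "\<And>U x. open U \<Longrightarrow> x \<in> U \<Longrightarrow> \<exists>B\<in>\<B>. x \<in> B \<and> B \<subseteq> U"
    using compact_UNIV_imp_second_countable[OF assms(4)] unfolding second_countable_def by auto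
  define C where "C = (\<Pi>\<^sub>E j\<in>{1..d}. \<B>)"
  define D where "D V = diag_visit_set T d V \<union> - closure (diag_visit_set T d V)" for V
  have "countable (D ` C)"
    unfolding C_def using \<open>countable \<B>\<close> by (simp add: countable_PiE)
  have open_D: "open (D V)" if "V \<in> C" for V
    unfolding D_def using that open_basis
    by (intro open_Un open_Compl closed_closure open_diag_visit_set assms(2,3))
      (auto simp: C_def PiE_iff)
  have dense_D: "closure (D V) = UNIV" for V
    unfolding D_def by (rule closure_Un_Compl_closure)
  show ?thesis
  proof (rule that)
    show "gdelta_in euclidean (\<Inter>(D ` C))"
      using \<open>countable (D ` C)\<close> open_D by (intro gdelta_in_Inter_open) auto
    show "closure (\<Inter>(D ` C)) = UNIV"
      using \<open>countable (D ` C)\<close> open_D dense_D by (intro Baire_compact_UNIV[OF assms(4)]) auto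
    show "w \<in> Lset T d x"
      if "x \<in> \<Inter>(D ` C)" "w \<in> extensional {1..d}" "prepend d x w \<in> Nset T (d+1)" for x w
      using that
      by (intro mem_Lset_if_diag_visits_decided[OF assms(1) open_basis basis]) (auto simp: C_def D_def)
  qed
qed

lemma char_factor_if_Nset_saturated:
  fixes T :: "'a::metric_space \<Rightarrow> 'a"
  assumes "bij T" "continuous_on UNIV T" "continuous_on UNIV (inv T)" "compact (UNIV :: 'a set)"
    and sat: "pi_pow_preimage \<pi> (d+1) (pi_pow \<pi> (d+1) ` Nset T (d+1)) = Nset T (d+1)"
  shows "char_factor T \<pi> d"
proof -
  obtain \<Omega> where \<Omega>: "gdelta_in euclidean \<Omega>" "closure \<Omega> = UNIV"
    and generic: "\<And>x w. x \<in> \<Omega> \<Longrightarrow> w \<in> extensional {1..d} \<Longrightarrow> prepend d x w \<in> Nset T (d+1) \<Longrightarrow>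
      w \<in> Lset T d x"
    using dense_gdelta_prepend_Nset_imp_Lset[OF assms(1-4)] by blast
  have "pi_pow_preimage \<pi> d (pi_pow \<pi> d ` Lset T d x) \<subseteq> Lset T d x" if "x \<in> \<Omega>" for x
  proof
    fix w assume "w \<in> pi_pow_preimage \<pi> d (pi_pow \<pi> d ` Lset T d x)"
    then obtain l where "w \<in> extensional {1..d}" "l \<in> Lset T d x" "pi_pow \<pi> d w = pi_pow \<pi> d l"
      by (auto simp: pi_pow_preimage_def)
    moreover from \<open>l \<in> Lset T d x\<close> have "prepend d x l \<in> Nset T (d+1)"
      using prepend_Lset_subset_Nset by blast
    ultimately have "pi_pow \<pi> (d+1) (prepend d x w) \<in> pi_pow \<pi> (d+1) ` Nset T (d+1)"
      by (metis image_eqI pi_pow_prepend)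
    then have "prepend d x w \<in> pi_pow_preimage \<pi> (d+1) (pi_pow \<pi> (d+1) ` Nset T (d+1))"
      using prepend_extensional by (simp add: pi_pow_preimage_def)
    then show "w \<in> Lset T d x"
      using generic[OF that \<open>w \<in> extensional {1..d}\<close>] sat by simp
  qed
  moreover have "Lset T d x \<subseteq> pi_pow_preimage \<pi> d (pi_pow \<pi> d ` Lset T d x)" for x
    by (auto simp: pi_pow_preimage_def mem_Lset_iff)
  ultimately show ?thesis
    unfolding char_factor_def using \<Omega> by blast
qed

theorem theorem4p5:
  fixes T :: "'a::metric_space \<Rightarrow> 'a" and S :: "'b::metric_space \<Rightarrow> 'b"
    and \<pi> :: "'a \<Rightarrow> 'b" and d :: nat
  assumes "minimal_sys T" and "minimal_sys S" and "factor_map T S \<pi>"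
  shows "(char_factor T \<pi> d \<and> is_open_map \<pi> \<longrightarrow>
            pi_pow_preimage \<pi> (d+1) (Nset S (d+1)) = Nset T (d+1))
       \<and> (pi_pow_preimage \<pi> (d+1) (pi_pow \<pi> (d+1) ` Nset T (d+1)) = Nset T (d+1)
            \<longrightarrow> char_factor T \<pi> d)"
proof -
  from \<open>factor_map T S \<pi>\<close> have "tds T" "tds S" "continuous_on UNIV \<pi>" "\<pi> \<circ> T = S \<circ> \<pi>"
    unfolding factor_map_def by auto
  then have T: "bij T" "continuous_on UNIV T" "continuous_on UNIV (inv T)" "compact (UNIV :: 'a set)"
    and S: "bij S" "continuous_on UNIV S" "continuous_on UNIV (inv S)"
    unfolding tds_def by auto
  show ?thesis
  proof (intro conjI impI)
    assume "char_factor T \<pi> d \<and> is_open_map \<pi>"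
    then show "pi_pow_preimage \<pi> (d+1) (Nset S (d+1)) = Nset T (d+1)"
      using pi_pow_preimage_Nset_eq_if_char_factor[OF T(1) S \<open>\<pi> \<circ> T = S \<circ> \<pi>\<close> \<open>continuous_on UNIV \<pi>\<close>]
      by simp
  next
    assume "pi_pow_preimage \<pi> (d+1) (pi_pow \<pi> (d+1) ` Nset T (d+1)) = Nset T (d+1)"
    then show "char_factor T \<pi> d"
      by (rule char_factor_if_Nset_saturated[OF T])
  qed
qed

end
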